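(* Let $p$ be a prime number and let $1\to F\to H\to\bar H\to1$ be an exact sequence of finite groups such that $\bar H$ is abelian and generated by $r$ elements. Suppose that $|F|\le B\cdot|F_p|^e$ for some positive constants $B$ and $e$, where $F_p$ is a $p$-Sylow subgroup of $F$, and that $F$ is generated by $s$ elements. Then $H$ contains a characteristic abelian subgroup of order coprime to $p$ and index at most $B^{r+s}\cdot|H_p|^{e(r+s)+1}$, where $H_p$ is a $p$-Sylow subgroup of $H$. *)

theory Defs
  imports "HOL-Algebra.Algebra" "HOL-Computational_Algebra.Primes"
begin

definition generated_by_at_most :: "('a, 'b) monoid_scheme \<Rightarrow> nat \<Rightarrow> bool" where
  "generated_by_at_most G n \<longleftrightarrow>
     (\<exists>S. S \<subseteq> carrier G \<and> finite S \<and> card S \<le> n \<and> generate G S = carrier G)"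

definition sylow_subgroup :: "nat \<Rightarrow> ('a, 'b) monoid_scheme \<Rightarrow> 'a set \<Rightarrow> bool" where
  "sylow_subgroup p G P \<longleftrightarrow>
     subgroup P G \<and> card P = p ^ multiplicity p (order G)"

definition characteristic_subgroup :: "'a set \<Rightarrow> ('a, 'b) monoid_scheme \<Rightarrow> bool" where
  "characteristic_subgroup A G \<longleftrightarrow>
     subgroup A G \<and> (\<forall>\<phi> \<in> iso G G. \<phi> ` A = A)"

end

(*
  Let m be the part of |H| prime to p and let A consist of the central elements of H whose
  order divides m; A is characteristic and abelian, and by Cauchy's theorem p does not
  divide |A|.  Lifts of r generators of Hbar together with s generators of F generate H.
  As Hbar is abelian, h x h^-1 lies in the coset F x for each such generator x, and two
  elements of H conjugate all generators alike iff they differ by a central element; hence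
  [H : Z(H)] <= |F|^(r+s).  The m-th power map sends Z(H) into its p-torsion, of order at
  most |H_p|, with kernel A, so [Z(H) : A] <= |H_p|.  Finally |F| <= B |F_p|^e <= B |H_p|^e.
*)

theory Submission
  imports Defs
begin

definition center :: "('a, 'b) monoid_scheme \<Rightarrow> 'a set" where
  "center G = {z \<in> carrier G. \<forall>g \<in> carrier G. z \<otimes>\<^bsub>G\<^esub> g = g \<otimes>\<^bsub>G\<^esub> z}"

definition center_torsion :: "('a, 'b) monoid_scheme \<Rightarrow> nat \<Rightarrow> 'a set" where
  "center_torsion G n = {z \<in> center G. z [^]\<^bsub>G\<^esub> n = \<one>\<^bsub>G\<^esub>}"

definition coprime_part :: "nat \<Rightarrow> nat \<Rightarrow> nat" where
  "coprime_part p n = n div p ^ multiplicity p n"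

lemma coprime_part_decompose:
  assumes "n \<noteq> 0" and p: "Factorial_Ring.prime p"
  shows "n = p ^ multiplicity p n * coprime_part p n" and "coprime (coprime_part p n) p"
proof -
  show "n = p ^ multiplicity p n * coprime_part p n"
    unfolding coprime_part_def by (simp add: multiplicity_dvd)
  have "\<not> p dvd coprime_part p n" unfolding coprime_part_def
    by (rule multiplicity_decompose) (use assms in auto)
  then show "coprime (coprime_part p n) p"
    using prime_imp_coprime[OF p] coprime_commute by blast
qed

context group
begin

lemma card_le_card_image_mult_card:
  assumes S: "S \<subseteq> carrier G" and "finite K"
    and fibres: "\<And>x y. x \<in> S \<Longrightarrow> y \<in> S \<Longrightarrow> f x = f y \<Longrightarrow> inv x \<otimes> y \<in> K"
  shows "card S \<le> card (f ` S) * card K"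
proof (cases "finite S")
  case True
  define rep where "rep v = (SOME y. y \<in> S \<and> f y = v)" for v
  have rep: "rep (f x) \<in> S \<and> f (rep (f x)) = f x" if "x \<in> S" for x
    unfolding rep_def by (rule someI[of _ x]) (use that in auto)
  define \<psi> where "\<psi> x = (f x, inv (rep (f x)) \<otimes> x)" for x
  have "inj_on \<psi> S"
  proof (rule inj_onI)
    fix x y assume xy: "x \<in> S" "y \<in> S" "\<psi> x = \<psi> y"
    then have "f x = f y" and "inv (rep (f x)) \<otimes> x = inv (rep (f x)) \<otimes> y"
      unfolding \<psi>_def by auto
    moreover have "rep (f x) \<in> carrier G" using rep[OF xy(1)] S by auto
    ultimately show "x = y" using xy S by (meson inv_closed l_cancel subsetD)
  qed
  moreover have "\<psi> ` S \<subseteq> f ` S \<times> K"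
    unfolding \<psi>_def using rep fibres by auto
  ultimately have "card S \<le> card (f ` S \<times> K)"
    using card_inj_on_le True \<open>finite K\<close> by blast
  then show ?thesis by (simp add: card_cartesian_product)
qed simp

lemma center_subset: "center G \<subseteq> carrier G"
  unfolding center_def by blast

lemma center_commute: "z \<in> center G \<Longrightarrow> g \<in> carrier G \<Longrightarrow> z \<otimes> g = g \<otimes> z"
  unfolding center_def by blast

lemma subgroup_centralizer:
  assumes c: "c \<in> carrier G"
  shows "subgroup {g \<in> carrier G. c \<otimes> g = g \<otimes> c} G"
proof (rule subgroup.intro)
  fix x y assume "x \<in> {g \<in> carrier G. c \<otimes> g = g \<otimes> c}" "y \<in> {g \<in> carrier G. c \<otimes> g = g \<otimes> c}"
  then have x: "x \<in> carrier G" "c \<otimes> x = x \<otimes> c" and y: "y \<in> carrier G" "c \<otimes> y = y \<otimes> c"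
    by auto
  have "c \<otimes> (x \<otimes> y) = x \<otimes> c \<otimes> y" using x c y by (simp flip: m_assoc)
  also have "\<dots> = x \<otimes> (y \<otimes> c)" using x c y by (simp add: m_assoc flip: y(2))
  finally show "x \<otimes> y \<in> {g \<in> carrier G. c \<otimes> g = g \<otimes> c}" using x y c by (simp flip: m_assoc)
next
  fix x assume "x \<in> {g \<in> carrier G. c \<otimes> g = g \<otimes> c}"
  then have x: "x \<in> carrier G" "c \<otimes> x = x \<otimes> c" by auto
  have "c \<otimes> inv x = inv x \<otimes> (x \<otimes> c) \<otimes> inv x" using x c by (simp flip: m_assoc)
  also have "\<dots> = inv x \<otimes> c" using x c by (simp add: m_assoc flip: x(2))
  finally show "inv x \<in> {g \<in> carrier G. c \<otimes> g = g \<otimes> c}" using x by simp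
qed (use c in auto)

lemma subgroup_center: "subgroup (center G) G"
proof -
  let ?C = "insert (carrier G) ((\<lambda>c. {g \<in> carrier G. c \<otimes> g = g \<otimes> c}) ` carrier G)"
  have "center G = \<Inter> ?C"
    unfolding center_def by auto
  moreover have "subgroup (\<Inter> ?C) G"
    by (rule subgroups_Inter) (auto intro: subgroup_self subgroup_centralizer)
  ultimately show ?thesis by simp
qed

lemma center_if_commutes_with_generators:
  assumes S: "S \<subseteq> carrier G" and gen: "generate G S = carrier G"
    and c: "c \<in> carrier G" and comm: "\<And>x. x \<in> S \<Longrightarrow> c \<otimes> x = x \<otimes> c"
  shows "c \<in> center G"
proof -
  have "generate G S \<subseteq> {g \<in> carrier G. c \<otimes> g = g \<otimes> c}"
    using S comm by (intro generate_subgroup_incl subgroup_centralizer c) auto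
  then show ?thesis using gen c unfolding center_def by auto
qed

lemma subgroup_center_torsion: "subgroup (center_torsion G n) G"
proof (rule subgroup.intro)
  fix x y assume "x \<in> center_torsion G n" "y \<in> center_torsion G n"
  then have x: "x \<in> center G" "x [^] n = \<one>" and y: "y \<in> center G" "y [^] n = \<one>"
    unfolding center_torsion_def by auto
  have "x \<otimes> y \<in> center G" using x y subgroup.m_closed[OF subgroup_center] by blast
  moreover have "(x \<otimes> y) [^] n = \<one>"
    using x y center_subset by (simp add: pow_mult_distrib center_commute subset_iff)
  ultimately show "x \<otimes> y \<in> center_torsion G n"
    unfolding center_torsion_def by auto
next
  fix x assume "x \<in> center_torsion G n"
  then have x: "x \<in> center G" "x [^] n = \<one>" unfolding center_torsion_def by auto
  have "inv x \<in> center G" using x subgroup.m_inv_closed[OF subgroup_center] by blast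
  moreover have "inv x [^] n = \<one>" using x center_subset by (auto simp: nat_pow_inv)
  ultimately show "inv x \<in> center_torsion G n"
    unfolding center_torsion_def by auto
qed (use center_subset in \<open>auto simp: center_torsion_def center_def\<close>)

lemma iso_image_center_torsion_subset:
  assumes \<phi>: "\<phi> \<in> iso G G"
  shows "\<phi> ` center_torsion G n \<subseteq> center_torsion G n"
proof
  fix w assume "w \<in> \<phi> ` center_torsion G n"
  then obtain z where z: "z \<in> center G" "z [^] n = \<one>" and w: "w = \<phi> z"
    unfolding center_torsion_def by blast
  interpret \<phi>: group_hom G G \<phi>
    using \<phi> by (simp add: group_hom_def group_hom_axioms_def iso_imp_homomorphism group_axioms)
  have surj: "\<phi> ` carrier G = carrier G" using \<phi> by (simp add: iso_def bij_betw_def)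
  have zG: "z \<in> carrier G" using z(1) center_subset by blast
  have "\<phi> z \<otimes> g = g \<otimes> \<phi> z" if "g \<in> carrier G" for g
  proof -
    obtain g' where g': "g' \<in> carrier G" "g = \<phi> g'" using \<open>g \<in> carrier G\<close> surj by blast
    have "\<phi> z \<otimes> \<phi> g' = \<phi> (z \<otimes> g')" using zG g' by simp
    also have "\<dots> = \<phi> (g' \<otimes> z)" using center_commute[OF z(1) g'(1)] by simp
    finally show ?thesis using zG g' by simp
  qed
  moreover have "\<phi> z [^] n = \<one>" using zG z(2) by (simp flip: \<phi>.hom_nat_pow)
  ultimately show "w \<in> center_torsion G n"
    using zG w unfolding center_torsion_def center_def by simp
qed

lemma characteristic_center_torsion: "characteristic_subgroup (center_torsion G n) G"
  unfolding characteristic_subgroup_def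
proof (intro conjI ballI subgroup_center_torsion equalityI iso_image_center_torsion_subset)
  fix \<phi> assume \<phi>: "\<phi> \<in> iso G G"
  show "center_torsion G n \<subseteq> \<phi> ` center_torsion G n"
  proof
    fix a assume a: "a \<in> center_torsion G n"
    have "inv_into (carrier G) \<phi> a \<in> center_torsion G n"
      using iso_image_center_torsion_subset[OF iso_set_sym[OF \<phi>]] a by blast
    moreover have "a \<in> \<phi> ` carrier G"
      using a \<phi> subgroup.subset[OF subgroup_center_torsion] by (auto simp: iso_def bij_betw_def)
    ultimately show "a \<in> \<phi> ` center_torsion G n" by (metis f_inv_into_f imageI)
  qed
qed

lemma prime_dvd_exponent:
  assumes fin: "finite (carrier G)" and q: "Factorial_Ring.prime q" and "q dvd order G"
    and exponent: "\<And>x. x \<in> carrier G \<Longrightarrow> x [^] n = \<one>"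
  shows "q dvd n"
proof -
  obtain m where "order G = q ^ 1 * m" using \<open>q dvd order G\<close> by auto
  from sylow_thm[OF q is_group this fin] obtain Q where Q: "subgroup Q G" "card Q = q"
    by auto
  interpret Q: group "G\<lparr>carrier := Q\<rparr>" using subgroup_imp_group[OF Q(1)] .
  have "Q \<noteq> {\<one>}" using Q prime_gt_1_nat[OF q] by auto
  then obtain x where x: "x \<in> Q" "x \<noteq> \<one>" using subgroup.one_closed[OF Q(1)] by blast
  have xG: "x \<in> carrier G" using x(1) subgroup.subset[OF Q(1)] by blast
  have "x [^] q = \<one>"
    using Q.pow_order_eq_1[of x] x Q by (simp add: order_def flip: nat_pow_consistent)
  then have "ord x dvd q" using pow_eq_id[OF xG] by simp
  moreover have "ord x \<noteq> 1" using ord_eq_1[OF xG] x by simp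
  ultimately have "ord x = q" using q by (meson prime_nat_iff)
  then show ?thesis using pow_eq_id[OF xG] exponent[OF xG] by simp
qed

lemma coprime_card_subgroup_if_exponent:
  assumes K: "subgroup K G" "finite K" and exponent: "\<And>x. x \<in> K \<Longrightarrow> x [^] n = \<one>"
    and "coprime n c"
  shows "coprime (card K) c"
proof (rule ccontr)
  assume "\<not> coprime (card K) c"
  then obtain d where d: "d dvd card K" "d dvd c" "\<not> is_unit d" by (rule not_coprimeE)
  then obtain q where q: "Factorial_Ring.prime q" "q dvd d" using prime_factor_nat by auto
  interpret K: group "G\<lparr>carrier := K\<rparr>" using subgroup_imp_group[OF K(1)] .
  have "q dvd n"
  proof (rule K.prime_dvd_exponent)
    show "q dvd order (G\<lparr>carrier := K\<rparr>)" using q d by (auto simp: order_def intro: dvd_trans)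
    show "x [^]\<^bsub>G\<lparr>carrier := K\<rparr>\<^esub> n = \<one>\<^bsub>G\<lparr>carrier := K\<rparr>\<^esub>" if "x \<in> carrier (G\<lparr>carrier := K\<rparr>)" for x
      using exponent[of x] that nat_pow_consistent[of x n K] by simp
  qed (use K q in simp_all)
  then show False
    using coprime_common_divisor[OF \<open>coprime n c\<close> \<open>q dvd n\<close>] q d dvd_trans not_prime_unit by blast
qed

lemma card_center_le_torsion_product:
  assumes fin: "finite (carrier G)" and ord: "order G = a * b"
  shows "card (center G) \<le> card (center_torsion G a) * card (center_torsion G b)"
proof -
  have fin_torsion: "finite (center_torsion G n)" for n
    using fin subgroup.subset[OF subgroup_center_torsion] by (rule finite_subset[rotated])
  have "card (center G) \<le> card ((\<lambda>z. z [^] b) ` center G) * card (center_torsion G b)"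
  proof (rule card_le_card_image_mult_card[OF center_subset fin_torsion])
    fix x y assume x: "x \<in> center G" and y: "y \<in> center G" and "x [^] b = y [^] b"
    have xG: "x \<in> carrier G" and yG: "y \<in> carrier G" using x y center_subset by auto
    have "inv x \<otimes> y \<in> center G"
      by (intro subgroup.m_closed[OF subgroup_center] subgroup.m_inv_closed[OF subgroup_center] x y)
    moreover have "(inv x \<otimes> y) [^] b = inv (x [^] b) \<otimes> y [^] b"
      using xG yG center_commute[OF y] by (simp add: pow_mult_distrib nat_pow_inv)
    ultimately show "inv x \<otimes> y \<in> center_torsion G b"
      using yG \<open>x [^] b = y [^] b\<close> unfolding center_torsion_def by simp
  qed
  moreover have "(\<lambda>z. z [^] b) ` center G \<subseteq> center_torsion G a"
  proof
    fix w assume "w \<in> (\<lambda>z. z [^] b) ` center G"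
    then obtain z where z: "z \<in> center G" and w: "w = z [^] b" by blast
    have zG: "z \<in> carrier G" using z center_subset by blast
    have "w \<in> center G"
      using zG center_commute[OF z] unfolding w center_def by (simp add: group_commutes_pow)
    moreover have "w [^] a = \<one>"
      using zG pow_order_eq_1[OF zG] unfolding w ord by (simp add: nat_pow_pow mult.commute)
    ultimately show "w \<in> center_torsion G a" unfolding center_torsion_def by simp
  qed
  then have "card ((\<lambda>z. z [^] b) ` center G) \<le> card (center_torsion G a)"
    by (rule card_mono[OF fin_torsion])
  ultimately show ?thesis by (meson le_trans mult_le_mono1)
qed

lemma card_center_torsion_le:
  assumes fin: "finite (carrier G)" and ord: "order G = a * b" and "coprime a b"
  shows "card (center_torsion G a) \<le> a"
proof -
  have T: "subgroup (center_torsion G a) G" by (rule subgroup_center_torsion)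
  have fin_T: "finite (center_torsion G a)" using fin subgroup.subset[OF T] by (rule finite_subset[rotated])
  have "coprime (card (center_torsion G a)) b"
    by (rule coprime_card_subgroup_if_exponent[OF T fin_T _ \<open>coprime a b\<close>]) (simp add: center_torsion_def)
  moreover have "card (center_torsion G a) dvd a * b"
    unfolding ord[symmetric] lagrange[OF T, symmetric] by simp
  ultimately have "card (center_torsion G a) dvd a" by (simp add: coprime_dvd_mult_left_iff)
  moreover have "a \<noteq> 0" using ord fin order_gt_0_iff_finite by auto
  ultimately show ?thesis by (simp add: dvd_imp_le)
qed

lemma conj_eq_imp_commute:
  assumes h: "h \<in> carrier G" and h': "h' \<in> carrier G" and x: "x \<in> carrier G"
    and "h \<otimes> x \<otimes> inv h = h' \<otimes> x \<otimes> inv h'"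
  shows "inv h \<otimes> h' \<otimes> x = x \<otimes> (inv h \<otimes> h')"
proof -
  have "x \<otimes> (inv h \<otimes> h') = inv h \<otimes> (h \<otimes> x \<otimes> inv h) \<otimes> h'"
    using h h' x by (simp add: m_assoc[symmetric])
  also have "\<dots> = inv h \<otimes> (h' \<otimes> x \<otimes> inv h') \<otimes> h'"
    by (simp only: \<open>h \<otimes> x \<otimes> inv h = h' \<otimes> x \<otimes> inv h'\<close>)
  also have "\<dots> = inv h \<otimes> h' \<otimes> x"
    using h h' x by (simp add: m_assoc)
  finally show ?thesis by simp
qed

lemma order_le_card_center:
  assumes fin: "finite (carrier G)"
    and S: "S \<subseteq> carrier G" "finite S" "generate G S = carrier G"
    and N: "subgroup N G"
    and commutator: "\<And>h x. h \<in> carrier G \<Longrightarrow> x \<in> S \<Longrightarrow> h \<otimes> x \<otimes> inv h \<otimes> inv x \<in> N"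
  shows "order G \<le> card N ^ card S * card (center G)"
proof -
  define \<phi> where "\<phi> h = (\<lambda>x \<in> S. h \<otimes> x \<otimes> inv h)" for h
  have NG: "N \<subseteq> carrier G" using N by (rule subgroup.subset)
  have fibres: "order G \<le> card (\<phi> ` carrier G) * card (center G)"
    unfolding order_def
  proof (rule card_le_card_image_mult_card[OF subset_refl])
    show "finite (center G)" using fin center_subset by (rule finite_subset[rotated])
  next
    fix h h' assume h: "h \<in> carrier G" and h': "h' \<in> carrier G" and "\<phi> h = \<phi> h'"
    show "inv h \<otimes> h' \<in> center G"
    proof (rule center_if_commutes_with_generators[OF S(1) S(3)])
      show "inv h \<otimes> h' \<in> carrier G" using h h' by simp
    next
      fix x assume x: "x \<in> S"
      have "h \<otimes> x \<otimes> inv h = h' \<otimes> x \<otimes> inv h'"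
        using fun_cong[OF \<open>\<phi> h = \<phi> h'\<close>, of x] x unfolding \<phi>_def by simp
      then show "inv h \<otimes> h' \<otimes> x = x \<otimes> (inv h \<otimes> h')"
        using h h' x S(1) by (intro conj_eq_imp_commute) auto
    qed
  qed
  have image: "\<phi> ` carrier G \<subseteq> (\<Pi>\<^sub>E x \<in> S. N #> x)"
  proof (clarsimp simp: \<phi>_def)
    fix h x assume h: "h \<in> carrier G" and x: "x \<in> S"
    then have xG: "x \<in> carrier G" using S(1) by blast
    have "h \<otimes> x \<otimes> inv h \<otimes> inv x \<otimes> x \<in> N #> x"
      using commutator[OF h x] NG xG by (rule rcosI)
    then show "h \<otimes> x \<otimes> inv h \<in> N #> x" using h xG by (simp add: m_assoc)
  qed
  have "finite (\<Pi>\<^sub>E x \<in> S. N #> x)"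
    using S fin r_coset_subset_G[OF NG] by (intro finite_PiE) (auto dest: finite_subset)
  moreover have "card (\<Pi>\<^sub>E x \<in> S. N #> x) = card N ^ card S"
  proof -
    have "card (\<Pi>\<^sub>E x \<in> S. N #> x) = (\<Prod>x \<in> S. card (N #> x))" by (rule card_PiE[OF S(2)])
    also have "\<dots> = (\<Prod>x \<in> S. card N)"
      using S(1) card_rcosets_equal[OF rcosetsI NG] NG by (intro prod.cong) auto
    finally show ?thesis by simp
  qed
  ultimately have "card (\<phi> ` carrier G) \<le> card N ^ card S"
    using card_mono[OF _ image] by simp
  then show ?thesis using fibres by (meson le_trans mult_le_mono1)
qed

lemma index_center_torsion_le:
  assumes fin: "finite (carrier G)" and ord: "order G = a * b" and "coprime a b"
    and "generated_by_at_most G n" and N: "subgroup N G"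
    and commutator: "\<And>h x. h \<in> carrier G \<Longrightarrow> x \<in> carrier G \<Longrightarrow> h \<otimes> x \<otimes> inv h \<otimes> inv x \<in> N"
  shows "card (rcosets (center_torsion G b)) \<le> card N ^ n * a"
proof -
  obtain S where S: "S \<subseteq> carrier G" "finite S" "card S \<le> n" "generate G S = carrier G"
    using \<open>generated_by_at_most G n\<close> unfolding generated_by_at_most_def by blast
  have "finite N" using fin subgroup.subset[OF N] by (rule finite_subset[rotated])
  then have "card N \<ge> 1" using subgroup.one_closed[OF N] by (metis One_nat_def Suc_leI card_gt_0_iff empty_iff)
  let ?A = "center_torsion G b"
  have "card (rcosets ?A) * card ?A = order G" by (rule lagrange[OF subgroup_center_torsion])
  also have "\<dots> \<le> card N ^ card S * card (center G)"
    using S commutator by (intro order_le_card_center[OF fin S(1,2,4) N]) blast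
  also have "\<dots> \<le> card N ^ n * (card (center_torsion G a) * card ?A)"
    by (intro mult_le_mono power_increasing card_center_le_torsion_product[OF fin ord] S(3) \<open>card N \<ge> 1\<close>)
  also have "\<dots> \<le> card N ^ n * (a * card ?A)"
    using card_center_torsion_le[OF fin ord \<open>coprime a b\<close>] by simp
  finally have "card (rcosets ?A) * card ?A \<le> card N ^ n * a * card ?A" by simp
  moreover have "card ?A > 0"
    using fin subgroup.subset[OF subgroup_center_torsion] subgroup.one_closed[OF subgroup_center_torsion]
    by (metis card_gt_0_iff empty_iff finite_subset)
  ultimately show ?thesis by simp
qed


lemma order_le_sylow_bound:
  assumes fin: "finite (carrier G)" and p: "Factorial_Ring.prime p" and "B \<ge> 0" "e \<ge> 0"
    and bound: "\<And>P. sylow_subgroup p G P \<Longrightarrow> real (order G) \<le> B * real (card P) powr e"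
    and "order G dvd n" "n \<noteq> 0"
  shows "real (order G) \<le> B * real (p ^ multiplicity p n) powr e"
proof -
  define j where "j = multiplicity p (order G)"
  have "order G = p ^ j * (order G div p ^ j)" unfolding j_def by (simp add: multiplicity_dvd)
  from sylow_thm[OF p is_group this fin] obtain P where P: "subgroup P G" "card P = p ^ j"
    by blast
  then have "real (order G) \<le> B * real (p ^ j) powr e"
    using bound unfolding sylow_subgroup_def j_def by simp
  also have "\<dots> \<le> B * real (p ^ multiplicity p n) powr e"
  proof -
    have "j \<le> multiplicity p n"
      unfolding j_def using \<open>order G dvd n\<close> \<open>n \<noteq> 0\<close> by (rule dvd_imp_multiplicity_le)
    then have "real (p ^ j) \<le> real (p ^ multiplicity p n)"
      using prime_gt_1_nat[OF p] by (intro of_nat_mono power_increasing) auto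
    then show ?thesis using \<open>B \<ge> 0\<close> \<open>e \<ge> 0\<close> by (intro mult_left_mono powr_mono2) auto
  qed
  finally show ?thesis .
qed

end

lemma (in group_hom) generate_eq_carrier_if_kernel_and_image:
  assumes S: "S \<subseteq> carrier G" and kernel: "kernel G H h \<subseteq> generate G S"
    and image: "h ` carrier G \<subseteq> generate H (h ` S)"
  shows "generate G S = carrier G"
proof
  show "generate G S \<subseteq> carrier G" using S by (rule G.generate_incl)
next
  show "carrier G \<subseteq> generate G S"
  proof
    fix y assume y: "y \<in> carrier G"
    then have "h y \<in> h ` generate G S" using image generate_img[OF S] by blast
    then obtain k where k: "k \<in> generate G S" "h y = h k" by blast
    have kG: "k \<in> carrier G" using k(1) G.generate_in_carrier[OF S] by blast
    have "y \<otimes>\<^bsub>G\<^esub> inv\<^bsub>G\<^esub> k \<in> kernel G H h" using y kG k(2) by (simp add: kernel_def)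
    then have "y \<otimes>\<^bsub>G\<^esub> inv\<^bsub>G\<^esub> k \<otimes>\<^bsub>G\<^esub> k \<in> generate G S"
      using kernel k(1) subgroup.m_closed[OF G.generate_is_subgroup[OF S]] by blast
    then show "y \<in> generate G S" using y kG by (simp add: G.m_assoc)
  qed
qed

lemma generated_by_at_most_extension:
  assumes "group F" "group H" "group K"
    and "i \<in> hom F H" and "\<pi> \<in> hom H K" and surj: "\<pi> ` carrier H = carrier K"
    and exact: "i ` carrier F = kernel H K \<pi>"
    and "generated_by_at_most K r" and "generated_by_at_most F s"
  shows "generated_by_at_most H (r + s)"
proof -
  interpret H: group H by fact
  interpret i: group_hom F H i by (simp add: group_hom_def group_hom_axioms_def assms)
  interpret \<pi>: group_hom H K \<pi> by (simp add: group_hom_def group_hom_axioms_def assms)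
  obtain S0 where S0: "S0 \<subseteq> carrier K" "finite S0" "card S0 \<le> r" "generate K S0 = carrier K"
    using \<open>generated_by_at_most K r\<close> unfolding generated_by_at_most_def by blast
  obtain S1 where S1: "S1 \<subseteq> carrier F" "finite S1" "card S1 \<le> s" "generate F S1 = carrier F"
    using \<open>generated_by_at_most F s\<close> unfolding generated_by_at_most_def by blast
  have "\<forall>y \<in> S0. \<exists>h \<in> carrier H. \<pi> h = y" using S0(1) surj by (metis imageE subsetD)
  then obtain lift where lift: "\<And>y. y \<in> S0 \<Longrightarrow> lift y \<in> carrier H \<and> \<pi> (lift y) = y" by metis
  define T where "T = lift ` S0"
  have T: "T \<subseteq> carrier H" "\<pi> ` T = S0" "finite T" "card T \<le> card S0"
    unfolding T_def using lift S0(2) by (auto simp: image_image card_image_le)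
  define S where "S = T \<union> i ` S1"
  have SH: "S \<subseteq> carrier H" unfolding S_def using T(1) S1(1) by auto
  have kernel_gen: "kernel H K \<pi> \<subseteq> generate H S"
  proof -
    have "kernel H K \<pi> = generate H (i ` S1)"
      using i.generate_img[OF S1(1)] S1(4) exact by simp
    also have "\<dots> \<subseteq> generate H S" unfolding S_def by (intro H.mono_generate) (use SH S_def in auto)
    finally show ?thesis .
  qed
  have "\<pi> ` carrier H \<subseteq> generate K (\<pi> ` S)"
    using S0(4) T(2) surj unfolding S_def by (metis Un_upper1 \<pi>.H.mono_generate image_Un image_subset_iff)
  with SH kernel_gen have "generate H S = carrier H"
    by (rule \<pi>.generate_eq_carrier_if_kernel_and_image)
  moreover have "card S \<le> r + s"
    using card_Un_le[of T "i ` S1"] card_image_le[OF S1(2), of i] T(4) S0(3) S1(3)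
    unfolding S_def by linarith
  ultimately show ?thesis
    unfolding generated_by_at_most_def using SH T(3) S1(2) S_def by blast
qed

lemma commutator_in_kernel:
  assumes "group H" "comm_group K" "\<pi> \<in> hom H K" and h: "h \<in> carrier H" and x: "x \<in> carrier H"
  shows "h \<otimes>\<^bsub>H\<^esub> x \<otimes>\<^bsub>H\<^esub> inv\<^bsub>H\<^esub> h \<otimes>\<^bsub>H\<^esub> inv\<^bsub>H\<^esub> x \<in> kernel H K \<pi>"
proof -
  interpret K: comm_group K by fact
  interpret \<pi>: group_hom H K \<pi> by (simp add: group_hom_def group_hom_axioms_def assms K.group_axioms)
  have "\<pi> (h \<otimes>\<^bsub>H\<^esub> x \<otimes>\<^bsub>H\<^esub> inv\<^bsub>H\<^esub> h \<otimes>\<^bsub>H\<^esub> inv\<^bsub>H\<^esub> x)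
      = \<pi> h \<otimes>\<^bsub>K\<^esub> \<pi> x \<otimes>\<^bsub>K\<^esub> (inv\<^bsub>K\<^esub> \<pi> h \<otimes>\<^bsub>K\<^esub> inv\<^bsub>K\<^esub> \<pi> x)"
    using h x by (simp add: K.m_assoc)
  also have "\<dots> = \<one>\<^bsub>K\<^esub>" using h x by (simp flip: K.inv_mult)
  finally show ?thesis using h x by (simp add: kernel_def)
qed

lemma power_mult_le_powr_bound:
  fixes x N B P e :: real
  assumes "x \<le> N ^ n * P" "0 \<le> N" "N \<le> B * P powr e" "1 \<le> P"
  shows "x \<le> B ^ n * P powr (e * n + 1)"
proof -
  have "N ^ n * P \<le> (B * P powr e) ^ n * P"
    using assms by (intro mult_right_mono power_mono) auto
  also have "\<dots> = B ^ n * P powr (e * n + 1)"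
    using assms(4) by (simp add: power_mult_distrib powr_add powr_powr flip: powr_realpow)
  finally show ?thesis using assms(1) by linarith
qed

lemma extension_index_center_torsion_le:
  assumes "group F" "group H" "comm_group K" "finite (carrier H)"
    and i: "i \<in> mon F H" and \<pi>: "\<pi> \<in> epi H K" and exact: "i ` carrier F = kernel H K \<pi>"
    and "generated_by_at_most K r" "generated_by_at_most F s"
    and "order H = a * b" "coprime a b"
  shows "card (rcosets\<^bsub>H\<^esub> center_torsion H b) \<le> order F ^ (r + s) * a"
proof -
  interpret H: group H by fact
  interpret K: comm_group K by fact
  have \<pi>_hom: "\<pi> \<in> hom H K" using \<pi> by (simp add: epi_def)
  have N: "subgroup (kernel H K \<pi>) H"
    using \<pi>_hom by (intro group_hom.subgroup_kernel) (simp add: group_hom_def group_hom_axioms_def K.group_axioms)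
  have "card (kernel H K \<pi>) = order F"
    unfolding order_def exact[symmetric] using i by (simp add: mon_def card_image)
  moreover have "card (rcosets\<^bsub>H\<^esub> center_torsion H b) \<le> card (kernel H K \<pi>) ^ (r + s) * a"
  proof (rule H.index_center_torsion_le[OF assms(4,10,11) _ N])
    show "generated_by_at_most H (r + s)"
      using assms(1-3,7-9) i \<pi> K.group_axioms
      by (intro generated_by_at_most_extension) (auto simp: mon_def epi_def)
    show "h \<otimes>\<^bsub>H\<^esub> x \<otimes>\<^bsub>H\<^esub> inv\<^bsub>H\<^esub> h \<otimes>\<^bsub>H\<^esub> inv\<^bsub>H\<^esub> x \<in> kernel H K \<pi>"
      if "h \<in> carrier H" "x \<in> carrier H" for h x
      using commutator_in_kernel[OF assms(2,3) \<pi>_hom that] .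
  qed
  ultimately show ?thesis by simp
qed

theorem lemma2p9:
  fixes p r s :: nat and B e :: real
    and F :: "('a, 'm1) monoid_scheme"
    and H :: "('b, 'm2) monoid_scheme"
    and Hbar :: "('c, 'm3) monoid_scheme"
    and i :: "'a \<Rightarrow> 'b" and \<pi> :: "'b \<Rightarrow> 'c"
  assumes "Factorial_Ring.prime p"
    and "group F" and "group H" and "comm_group Hbar"
    and "finite (carrier F)" and "finite (carrier H)" and "finite (carrier Hbar)"
    and "i \<in> mon F H" and "\<pi> \<in> epi H Hbar"
    and "i ` carrier F = kernel H Hbar \<pi>"
    and "generated_by_at_most Hbar r"
    and "B > 0" and "e > 0"
    and "\<And>Fp. sylow_subgroup p F Fp \<Longrightarrow> real (order F) \<le> B * real (card Fp) powr e"
    and "generated_by_at_most F s"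
  shows "\<exists>A. characteristic_subgroup A H
            \<and> (\<forall>x\<in>A. \<forall>y\<in>A. x \<otimes>\<^bsub>H\<^esub> y = y \<otimes>\<^bsub>H\<^esub> x)
            \<and> coprime (card A) p
            \<and> (\<forall>Hp. sylow_subgroup p H Hp \<longrightarrow>
                 real (card (rcosets\<^bsub>H\<^esub> A)) \<le> B ^ (r + s) * real (card Hp) powr (e * real (r + s) + 1))"
proof -
  interpret H: group H by fact
  define k where "k = multiplicity p (order H)"
  define m where "m = coprime_part p (order H)"
  have "order H \<noteq> 0" using H.order_gt_0_iff_finite assms(6) by simp
  then have ord: "order H = p ^ k * m" and "coprime m p"
    unfolding k_def m_def using coprime_part_decompose assms(1) by auto
  have "order F dvd order H"
  proof -
    interpret i: group_hom F H i
      using assms(2,3,8) by (simp add: group_hom_def group_hom_axioms_def mon_def)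
    have "card (i ` carrier F) = order F" using assms(8) by (simp add: mon_def card_image order_def)
    then show ?thesis using H.lagrange[OF i.img_is_subgroup] by (metis dvd_triv_right)
  qed
  then have "real (order F) \<le> B * real (p ^ k) powr e"
    using group.order_le_sylow_bound[OF assms(2,5,1) _ _ assms(14) _ \<open>order H \<noteq> 0\<close>] assms(12,13)
    unfolding k_def by simp
  moreover have "card (rcosets\<^bsub>H\<^esub> center_torsion H m) \<le> order F ^ (r + s) * p ^ k"
    using \<open>coprime m p\<close> assms(2-4,6,8-11,15)
    by (intro extension_index_center_torsion_le[OF _ _ _ _ _ _ _ _ _ ord]) (simp_all add: coprime_commute)
  ultimately have index: "real (card (rcosets\<^bsub>H\<^esub> center_torsion H m))
      \<le> B ^ (r + s) * real (p ^ k) powr (e * real (r + s) + 1)"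
    using prime_gt_1_nat[OF assms(1)]
    by (intro power_mult_le_powr_bound[of _ "real (order F)"]) (simp_all flip: of_nat_power of_nat_mult)
  have "coprime (card (center_torsion H m)) p"
    using assms(6) H.subgroup_center_torsion[of m] \<open>coprime m p\<close>
    by (intro H.coprime_card_subgroup_if_exponent) (auto simp: center_torsion_def dest: subgroup.subset finite_subset)
  then show ?thesis
    using H.characteristic_center_torsion[of m] index
    by (intro exI[of _ "center_torsion H m"])
      (auto simp: center_torsion_def sylow_subgroup_def k_def intro: H.center_commute dest: H.center_subset[THEN subsetD])
qed

end
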